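(* Let $G$ be a topological group with identity $e$ and let $\mathcal A$ be the collection of all open subgroups of $G$. Then $G$ is strongly totally separated with respect to its left uniformity (equivalently, with respect to its right uniformity) if and only if $\bigcap_{A\in\mathcal A}A=\{e\}$.
   Context: A topological group is a group with a topology making multiplication and inversion continuous. For $A\subseteq G$: $A_L=\{(x,y): x^{-1}y\in A\}$, $A_R=\{(x,y): yx^{-1}\in A\}$. The left (resp. right) uniformity is the uniformity on $G$ with base $\{W_L: W\text{ open}, e\in W\}$ (resp. $\{W_R\}$). Sets $A,B$ are uniformly separated with respect to a uniformity $\mathcal U$ if some $U\in\mathcal U$ contains no $(x,y)$ with $x\in A$, $y\in B$. A uniform space $(X,\mathcal U)$ is strongly totally separated if for all $x\neq y$ in $X$ there is $V\subseteq X$ with $x\in V$, $y\notin V$, and $V$ uniformly separated from $X\setminus V$. *)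

theory Defs
  imports "HOL-Analysis.Analysis"
begin

text \<open>Groups are written additively via the (not necessarily commutative) class group_add:
  x^{-1} y is rendered as -x + y, y x^{-1} as y + -x, the identity e as 0.\<close>

definition topological_group :: "'a::{topological_space, group_add} itself \<Rightarrow> bool" where
  "topological_group _ \<longleftrightarrow>
     continuous_on UNIV (\<lambda>p::'a \<times> 'a. fst p + snd p) \<and>
     continuous_on UNIV (\<lambda>x::'a. - x)"

definition L_rel :: "'a::group_add set \<Rightarrow> ('a \<times> 'a) set" where
  "L_rel A = {(x, y). - x + y \<in> A}"

definition R_rel :: "'a::group_add set \<Rightarrow> ('a \<times> 'a) set" where
  "R_rel A = {(x, y). y + - x \<in> A}"

definition left_uniformity :: "('a::{topological_space, group_add} \<times> 'a) set set" where
  "left_uniformity = {U. \<exists>W. open W \<and> 0 \<in> W \<and> L_rel W \<subseteq> U}"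

definition right_uniformity :: "('a::{topological_space, group_add} \<times> 'a) set set" where
  "right_uniformity = {U. \<exists>W. open W \<and> 0 \<in> W \<and> R_rel W \<subseteq> U}"

definition unif_separated :: "('a \<times> 'a) set set \<Rightarrow> 'a set \<Rightarrow> 'a set \<Rightarrow> bool" where
  "unif_separated \<U> A B \<longleftrightarrow> (\<exists>U\<in>\<U>. \<not> (\<exists>x\<in>A. \<exists>y\<in>B. (x, y) \<in> U))"

definition strongly_totally_separated :: "('a \<times> 'a) set set \<Rightarrow> bool" where
  "strongly_totally_separated \<U> \<longleftrightarrow>
     (\<forall>x y. x \<noteq> y \<longrightarrow> (\<exists>V. x \<in> V \<and> y \<notin> V \<and> unif_separated \<U> V (- V)))"

definition is_subgroup :: "'a::group_add set \<Rightarrow> bool" where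
  "is_subgroup H \<longleftrightarrow> 0 \<in> H \<and> (\<forall>x\<in>H. \<forall>y\<in>H. x + y \<in> H) \<and> (\<forall>x\<in>H. - x \<in> H)"

end

theory Submission
  imports Defs
begin

text \<open>If \<open>V\<close> is uniformly separated from its complement by the entourage of a symmetric
  neighbourhood \<open>W\<close> of \<open>0\<close>, then translating by elements of \<open>W\<close> can move points neither out of
  \<open>V\<close> nor into it. Hence the stabilizer of \<open>V\<close> is a subgroup containing \<open>W\<close>, and a subgroup
  containing a neighbourhood of \<open>0\<close> is open, being a union of translates of it. Conversely, a union
  of cosets of an open subgroup \<open>A\<close> is separated from its complement by the entourage of \<open>A\<close>.
  So a point is strongly separated from \<open>0\<close> exactly when some open subgroup omits it.\<close>

lemma topological_group_continuous_add_left: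
  fixes G :: "'a::{topological_space, group_add} itself"
  assumes "topological_group G"
  shows "continuous_on UNIV (\<lambda>x::'a. c + x)"
proof -
  have "continuous_on UNIV (\<lambda>p::'a \<times> 'a. fst p + snd p)"
    using assms unfolding topological_group_def by simp
  then have "continuous_on UNIV ((\<lambda>p::'a \<times> 'a. fst p + snd p) \<circ> (\<lambda>x. (c, x)))"
    by (intro continuous_on_compose continuous_intros) (auto intro: continuous_on_subset)
  then show ?thesis by (simp add: o_def)
qed

lemma topological_group_open_translation:
  fixes G :: "'a::{topological_space, group_add} itself" and W :: "'a set"
  assumes "topological_group G" "open W"
  shows "open ((\<lambda>w. c + w) ` W)"
proof -
  have "(\<lambda>w. c + w) ` W = (\<lambda>x. - c + x) -` W"
    by (force simp: add.assoc[symmetric] image_iff intro: exI[of _ "- c + x" for x])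
  then show ?thesis
    using topological_group_continuous_add_left[OF assms(1), of "- c"] assms(2)
    by (simp add: continuous_on_open_vimage)
qed

lemma topological_group_open_uminus_vimage:
  fixes G :: "'a::{topological_space, group_add} itself" and W :: "'a set"
  assumes "topological_group G" "open W"
  shows "open (uminus -` W)"
  using assms continuous_on_open_vimage[of UNIV "uminus :: 'a \<Rightarrow> 'a", OF open_UNIV]
  unfolding topological_group_def by auto

lemma is_subgroup_add_mem_iff:
  assumes "is_subgroup A" "a \<in> A"
  shows "b + a \<in> A \<longleftrightarrow> b \<in> A" and "a + b \<in> A \<longleftrightarrow> b \<in> A"
proof -
  have "b + a + - a = b" "- a + (a + b) = b" by (simp_all add: add.assoc[symmetric])
  then show "b + a \<in> A \<longleftrightarrow> b \<in> A" "a + b \<in> A \<longleftrightarrow> b \<in> A"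
    using assms unfolding is_subgroup_def by metis+
qed

lemma is_subgroup_right_translation_stabilizer:
  "is_subgroup {h :: 'a::group_add. \<forall>u. u + h \<in> V \<longleftrightarrow> u \<in> V}"
  unfolding is_subgroup_def
proof (intro conjI ballI)
  fix h k assume h: "h \<in> {h. \<forall>u. u + h \<in> V \<longleftrightarrow> u \<in> V}"
  have "u + - h \<in> V \<longleftrightarrow> u \<in> V" for u
    using h[simplified, rule_format, of "u + - h"] by (simp add: add.assoc)
  then show "- h \<in> {h. \<forall>u. u + h \<in> V \<longleftrightarrow> u \<in> V}" by simp
  assume "k \<in> {h. \<forall>u. u + h \<in> V \<longleftrightarrow> u \<in> V}"
  with h show "h + k \<in> {h. \<forall>u. u + h \<in> V \<longleftrightarrow> u \<in> V}"
    by (simp add: add.assoc[symmetric])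
qed simp

lemma is_subgroup_left_translation_stabilizer:
  "is_subgroup {h :: 'a::group_add. \<forall>u. h + u \<in> V \<longleftrightarrow> u \<in> V}"
  unfolding is_subgroup_def
proof (intro conjI ballI)
  fix h k assume h: "h \<in> {h. \<forall>u. h + u \<in> V \<longleftrightarrow> u \<in> V}"
  have "- h + u \<in> V \<longleftrightarrow> u \<in> V" for u
    using h[simplified, rule_format, of "- h + u"] by simp
  then show "- h \<in> {h. \<forall>u. h + u \<in> V \<longleftrightarrow> u \<in> V}" by simp
  assume "k \<in> {h. \<forall>u. h + u \<in> V \<longleftrightarrow> u \<in> V}"
  with h show "h + k \<in> {h. \<forall>u. h + u \<in> V \<longleftrightarrow> u \<in> V}"
    by (simp add: add.assoc)
qed simp

lemma open_subgroup_if_contains_nhd: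
  fixes G :: "'a::{topological_space, group_add} itself" and H W :: "'a set"
  assumes "topological_group G" "is_subgroup H" "open W" "0 \<in> W" "W \<subseteq> H"
  shows "open H"
proof -
  have "H = (\<Union>h\<in>H. (\<lambda>w. h + w) ` W)"
    using assms(2,4,5) by (force simp: is_subgroup_def)
  then show ?thesis
    using topological_group_open_translation[OF assms(1,3)] by (metis open_UN)
qed

lemma Inter_open_subgroups_eq_zero_iff:
  "\<Inter> {A :: 'a::{topological_space, group_add} set. open A \<and> is_subgroup A} = {0}
     \<longleftrightarrow> (\<forall>z::'a. z \<noteq> 0 \<longrightarrow> (\<exists>A. open A \<and> is_subgroup A \<and> z \<notin> A))"
  (is "?I = {0} \<longleftrightarrow> ?omitted")
proof
  assume eq: "?I = {0}"
  show ?omitted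
  proof (intro allI impI)
    fix z :: 'a assume "z \<noteq> 0"
    then have "z \<notin> ?I" unfolding eq by simp
    then show "\<exists>A. open A \<and> is_subgroup A \<and> z \<notin> A" by blast
  qed
next
  assume omitted: ?omitted
  show "?I = {0}"
  proof (intro equalityI subsetI)
    fix z assume z: "z \<in> ?I"
    show "z \<in> {0}"
    proof (rule ccontr)
      assume "z \<notin> {0}"
      with omitted obtain A where "open A" "is_subgroup A" "z \<notin> A"
        by blast
      with z show False by blast
    qed
  next
    fix z :: 'a assume "z \<in> {0}"
    then show "z \<in> ?I" by (simp add: is_subgroup_def)
  qed
qed

definition union_of_left_cosets :: "'a::group_add set \<Rightarrow> 'a set \<Rightarrow> bool" where
  "union_of_left_cosets A V \<longleftrightarrow> (\<forall>u. \<forall>a\<in>A. u + a \<in> V \<longleftrightarrow> u \<in> V)"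

definition union_of_right_cosets :: "'a::group_add set \<Rightarrow> 'a set \<Rightarrow> bool" where
  "union_of_right_cosets A V \<longleftrightarrow> (\<forall>u. \<forall>a\<in>A. a + u \<in> V \<longleftrightarrow> u \<in> V)"

lemma unif_separated_left_iff_open_subgroup:
  fixes G :: "'a::{topological_space, group_add} itself" and V :: "'a set"
  assumes "topological_group G"
  shows "unif_separated left_uniformity V (- V)
     \<longleftrightarrow> (\<exists>A. open A \<and> is_subgroup A \<and> union_of_left_cosets A V)"
proof
  assume "unif_separated left_uniformity V (- V)"
  then obtain W0 where W0: "open W0" "0 \<in> W0"
    and sep: "\<And>u v. u \<in> V \<Longrightarrow> v \<notin> V \<Longrightarrow> - u + v \<notin> W0"
    unfolding unif_separated_def left_uniformity_def L_rel_def by blast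
  define W where "W = W0 \<inter> uminus -` W0"
  define H where "H = {h. \<forall>u. u + h \<in> V \<longleftrightarrow> u \<in> V}"
  have "is_subgroup H"
    unfolding H_def by (rule is_subgroup_right_translation_stabilizer)
  moreover have "W \<subseteq> H"
  proof
    fix w assume "w \<in> W"
    then have w: "w \<in> W0" "- w \<in> W0" unfolding W_def by auto
    have "u + w \<in> V \<longleftrightarrow> u \<in> V" for u
    proof -
      have "- u + (u + w) = w" "- (u + w) + u = - w"
        by simp (simp only: minus_add add.assoc left_minus add.right_neutral)
      then show ?thesis using sep[of u "u + w"] sep[of "u + w" u] w by auto
    qed
    then show "w \<in> H" unfolding H_def by blast
  qed
  moreover have "open W" "0 \<in> W"
    using W0 topological_group_open_uminus_vimage[OF assms] unfolding W_def by auto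
  ultimately show "\<exists>A. open A \<and> is_subgroup A \<and> union_of_left_cosets A V"
    using open_subgroup_if_contains_nhd[OF assms]
    unfolding union_of_left_cosets_def H_def by blast
next
  assume "\<exists>A. open A \<and> is_subgroup A \<and> union_of_left_cosets A V"
  then obtain A where A: "open A" "is_subgroup A" "union_of_left_cosets A V"
    by blast
  have "\<not> (\<exists>u\<in>V. \<exists>v\<in>- V. (u, v) \<in> L_rel A)"
  proof (rule notI, elim bexE)
    fix u v assume "u \<in> V" "v \<in> - V" "(u, v) \<in> L_rel A"
    then have "u \<in> V" "v \<notin> V" "- u + v \<in> A" unfolding L_rel_def by auto
    moreover have "u + (- u + v) = v" by simp
    ultimately show False using A(3) unfolding union_of_left_cosets_def by metis
  qed
  moreover have "L_rel A \<in> left_uniformity"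
    using A(1,2) unfolding left_uniformity_def is_subgroup_def by blast
  ultimately show "unif_separated left_uniformity V (- V)"
    unfolding unif_separated_def by blast
qed

lemma strongly_totally_separated_left_iff:
  fixes G :: "'a::{topological_space, group_add} itself"
  assumes "topological_group G"
  shows "strongly_totally_separated (left_uniformity :: ('a \<times> 'a) set set)
     \<longleftrightarrow> (\<forall>z::'a. z \<noteq> 0 \<longrightarrow> (\<exists>A. open A \<and> is_subgroup A \<and> z \<notin> A))"
proof (intro iffI allI impI)
  fix z :: 'a
  assume st: "strongly_totally_separated (left_uniformity :: ('a \<times> 'a) set set)"
    and "z \<noteq> 0"
  then have "0 \<noteq> z" by simp
  with st obtain V where V: "0 \<in> V" "z \<notin> V" "unif_separated left_uniformity V (- V)"
    unfolding strongly_totally_separated_def by blast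
  from V(3) have "\<exists>A. open A \<and> is_subgroup A \<and> union_of_left_cosets A V"
    by (simp add: unif_separated_left_iff_open_subgroup[OF assms])
  then obtain A where A: "open A" "is_subgroup A" "union_of_left_cosets A V"
    by blast
  have "z \<notin> A"
  proof
    assume "z \<in> A"
    with A(3) have "0 + z \<in> V \<longleftrightarrow> 0 \<in> V"
      unfolding union_of_left_cosets_def by blast
    with V show False by simp
  qed
  with A(1,2) show "\<exists>A. open A \<and> is_subgroup A \<and> z \<notin> A" by blast
next
  assume subgroups: "\<forall>z::'a. z \<noteq> 0 \<longrightarrow> (\<exists>A. open A \<and> is_subgroup A \<and> z \<notin> A)"
  show "strongly_totally_separated (left_uniformity :: ('a \<times> 'a) set set)"
    unfolding strongly_totally_separated_def
  proof (intro allI impI)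
    fix x y :: 'a assume "x \<noteq> y"
    then have "- x + y \<noteq> 0" by (metis add_minus_cancel add.right_neutral)
    with subgroups obtain A where A: "open A" "is_subgroup A" "- x + y \<notin> A"
      by blast
    define V where "V = {v. - x + v \<in> A}"
    have "union_of_left_cosets A V"
      unfolding union_of_left_cosets_def V_def
      using is_subgroup_add_mem_iff(1)[OF A(2)] by (simp add: add.assoc[symmetric])
    with A(1,2) have "unif_separated left_uniformity V (- V)"
      by (intro unif_separated_left_iff_open_subgroup[OF assms, THEN iffD2]) blast
    moreover have "x \<in> V" "y \<notin> V"
      using A(2,3) unfolding V_def is_subgroup_def by simp_all
    ultimately show "\<exists>V. x \<in> V \<and> y \<notin> V \<and> unif_separated left_uniformity V (- V)"
      by blast
  qed
qed

lemma unif_separated_right_iff_open_subgroup: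
  fixes G :: "'a::{topological_space, group_add} itself" and V :: "'a set"
  assumes "topological_group G"
  shows "unif_separated right_uniformity V (- V)
     \<longleftrightarrow> (\<exists>A. open A \<and> is_subgroup A \<and> union_of_right_cosets A V)"
proof
  assume "unif_separated right_uniformity V (- V)"
  then obtain W0 where W0: "open W0" "0 \<in> W0"
    and sep: "\<And>u v. u \<in> V \<Longrightarrow> v \<notin> V \<Longrightarrow> v + - u \<notin> W0"
    unfolding unif_separated_def right_uniformity_def R_rel_def by blast
  define W where "W = W0 \<inter> uminus -` W0"
  define H where "H = {h. \<forall>u. h + u \<in> V \<longleftrightarrow> u \<in> V}"
  have "is_subgroup H"
    unfolding H_def by (rule is_subgroup_left_translation_stabilizer)
  moreover have "W \<subseteq> H"
  proof
    fix w assume "w \<in> W"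
    then have w: "w \<in> W0" "- w \<in> W0" unfolding W_def by auto
    have "w + u \<in> V \<longleftrightarrow> u \<in> V" for u
    proof -
      have "w + u + - u = w" "u + - (w + u) = - w"
        by (simp add: add.assoc) (simp only: minus_add add_minus_cancel)
      then show ?thesis using sep[of u "w + u"] sep[of "w + u" u] w by auto
    qed
    then show "w \<in> H" unfolding H_def by blast
  qed
  moreover have "open W" "0 \<in> W"
    using W0 topological_group_open_uminus_vimage[OF assms] unfolding W_def by auto
  ultimately show "\<exists>A. open A \<and> is_subgroup A \<and> union_of_right_cosets A V"
    using open_subgroup_if_contains_nhd[OF assms]
    unfolding union_of_right_cosets_def H_def by blast
next
  assume "\<exists>A. open A \<and> is_subgroup A \<and> union_of_right_cosets A V"
  then obtain A where A: "open A" "is_subgroup A" "union_of_right_cosets A V"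
    by blast
  have "\<not> (\<exists>u\<in>V. \<exists>v\<in>- V. (u, v) \<in> R_rel A)"
  proof (rule notI, elim bexE)
    fix u v assume "u \<in> V" "v \<in> - V" "(u, v) \<in> R_rel A"
    then have "u \<in> V" "v \<notin> V" "v + - u \<in> A" unfolding R_rel_def by auto
    moreover have "v + - u + u = v" by (simp add: add.assoc)
    ultimately show False using A(3) unfolding union_of_right_cosets_def by metis
  qed
  moreover have "R_rel A \<in> right_uniformity"
    using A(1,2) unfolding right_uniformity_def is_subgroup_def by blast
  ultimately show "unif_separated right_uniformity V (- V)"
    unfolding unif_separated_def by blast
qed

lemma strongly_totally_separated_right_iff:
  fixes G :: "'a::{topological_space, group_add} itself"
  assumes "topological_group G"
  shows "strongly_totally_separated (right_uniformity :: ('a \<times> 'a) set set)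
     \<longleftrightarrow> (\<forall>z::'a. z \<noteq> 0 \<longrightarrow> (\<exists>A. open A \<and> is_subgroup A \<and> z \<notin> A))"
proof (intro iffI allI impI)
  fix z :: 'a
  assume st: "strongly_totally_separated (right_uniformity :: ('a \<times> 'a) set set)"
    and "z \<noteq> 0"
  then have "0 \<noteq> z" by simp
  with st obtain V where V: "0 \<in> V" "z \<notin> V" "unif_separated right_uniformity V (- V)"
    unfolding strongly_totally_separated_def by blast
  from V(3) have "\<exists>A. open A \<and> is_subgroup A \<and> union_of_right_cosets A V"
    by (simp add: unif_separated_right_iff_open_subgroup[OF assms])
  then obtain A where A: "open A" "is_subgroup A" "union_of_right_cosets A V"
    by blast
  have "z \<notin> A"
  proof
    assume "z \<in> A"
    with A(3) have "z + 0 \<in> V \<longleftrightarrow> 0 \<in> V"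
      unfolding union_of_right_cosets_def by blast
    with V show False by simp
  qed
  with A(1,2) show "\<exists>A. open A \<and> is_subgroup A \<and> z \<notin> A" by blast
next
  assume subgroups: "\<forall>z::'a. z \<noteq> 0 \<longrightarrow> (\<exists>A. open A \<and> is_subgroup A \<and> z \<notin> A)"
  show "strongly_totally_separated (right_uniformity :: ('a \<times> 'a) set set)"
    unfolding strongly_totally_separated_def
  proof (intro allI impI)
    fix x y :: 'a assume "x \<noteq> y"
    then have "y + - x \<noteq> 0" by (metis diff_add_cancel diff_conv_add_uminus add_0)
    with subgroups obtain A where A: "open A" "is_subgroup A" "y + - x \<notin> A"
      by blast
    define V where "V = {v. v + - x \<in> A}"
    have "union_of_right_cosets A V"
      unfolding union_of_right_cosets_def V_def
      using is_subgroup_add_mem_iff(2)[OF A(2)] by (simp add: add_diff_eq[symmetric])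
    with A(1,2) have "unif_separated right_uniformity V (- V)"
      by (intro unif_separated_right_iff_open_subgroup[OF assms, THEN iffD2]) blast
    moreover have "x \<in> V" "y \<notin> V"
      using A(2,3) unfolding V_def is_subgroup_def by simp_all
    ultimately show "\<exists>V. x \<in> V \<and> y \<notin> V \<and> unif_separated right_uniformity V (- V)"
      by blast
  qed
qed

theorem mainTheorem17:
  fixes G :: "'a::{topological_space, group_add} itself"
  assumes "topological_group G"
  shows "(strongly_totally_separated (left_uniformity :: ('a \<times> 'a) set set)
            \<longleftrightarrow> \<Inter> {A :: 'a set. open A \<and> is_subgroup A} = {0})
       \<and> (strongly_totally_separated (right_uniformity :: ('a \<times> 'a) set set)
            \<longleftrightarrow> \<Inter> {A :: 'a set. open A \<and> is_subgroup A} = {0})"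
  unfolding Inter_open_subgroups_eq_zero_iff
    strongly_totally_separated_left_iff[OF assms] strongly_totally_separated_right_iff[OF assms]
  by simp

end
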